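(* Let $\psi:X\to Y$ be a function between two finite metric spaces such that $\psi(X)$ is $D$-dense in $Y$ for some $D\geq0$. Let $B\subseteq Y$ be nonempty. Then $$|\psi^{-1}(B)|\geq|B|\cdot\frac{1}{N_Y(D)}\cdot\left(1-\frac{|\partial^{\rm in}_D(B)|}{|B|}\right).$$
   Context: A subset $S\subseteq Y$ is $D$-dense if every point of $Y$ is within distance $D$ of a point of $S$. $N_Y(D)=\sup_{y\in Y}|B(y,D)|$, where $B(y,D)$ is the closed ball. The inner $D$-boundary of $B\subseteq Y$ is $\partial^{\rm in}_D(B)=\{y\in B: d(y,Y\setminus B)\leq D\}$. *)

theory Defs
  imports "HOL-Analysis.Analysis"
begin

text \<open>Finite metric spaces are modelled as finite subsets of metric-space types.\<close>

definition dense_in :: "real \<Rightarrow> 'b::metric_space set \<Rightarrow> 'b set \<Rightarrow> bool" where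
  "dense_in D S Y \<longleftrightarrow> (\<forall>y\<in>Y. \<exists>s\<in>S. dist y s \<le> D)"

definition ball_count :: "'b::metric_space set \<Rightarrow> real \<Rightarrow> nat" where
  "ball_count Y D = Max ((\<lambda>y. card (cball y D \<inter> Y)) ` Y)"

text \<open>Inner D-boundary of B in Y; d(y, empty set) is +infinity, so the set is empty if B = Y.\<close>
definition inner_boundary :: "'b::metric_space set \<Rightarrow> real \<Rightarrow> 'b set \<Rightarrow> 'b set" where
  "inner_boundary Y D B = {y\<in>B. \<exists>z\<in>Y - B. dist y z \<le> D}"

end

theory Submission
  imports Defs
begin

text \<open>Every point of B off the inner D-boundary is within D of some point of \<psi>(X), and that
  point must lie in B itself. So the D-balls around the points of \<psi>(X) \<inter> B cover
  B minus its inner boundary, and each such ball has at most N_Y(D) points.\<close>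

lemma card_cball_le_ball_count:
  assumes "finite Y" and "y \<in> Y"
  shows "card (cball y D \<inter> Y) \<le> ball_count Y D"
  unfolding ball_count_def using assms by (intro Max_ge) auto

lemma ball_count_pos:
  assumes "finite Y" and "Y \<noteq> {}" and "D \<ge> 0"
  shows "ball_count Y D > 0"
proof -
  obtain y where y: "y \<in> Y" using assms(2) by blast
  with assms(3) have "y \<in> cball y D \<inter> Y" by simp
  with assms(1) have "card (cball y D \<inter> Y) > 0" by (metis card_gt_0_iff empty_iff finite_Int)
  with card_cball_le_ball_count[OF assms(1) y, of D] show ?thesis by linarith
qed

lemma card_le_card_centres_mult_ball_count:
  assumes "finite Y" and "S \<subseteq> Y" and "A \<subseteq> (\<Union>s\<in>S. cball s D \<inter> Y)"
  shows "card A \<le> card S * ball_count Y D"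
proof -
  have finS: "finite S" using assms(1,2) finite_subset by blast
  have "card A \<le> card (\<Union>s\<in>S. cball s D \<inter> Y)"
    using assms finS by (intro card_mono) auto
  also have "\<dots> \<le> (\<Sum>s\<in>S. card (cball s D \<inter> Y))"
    by (rule card_UN_le[OF finS])
  also have "\<dots> \<le> card S * ball_count Y D"
    using sum_bounded_above[of S "\<lambda>s. card (cball s D \<inter> Y)" "ball_count Y D"]
      card_cball_le_ball_count[OF assms(1)] assms(2) by auto
  finally show ?thesis .
qed

lemma dense_in_covers_off_inner_boundary:
  assumes "dense_in D S Y" and "S \<subseteq> Y" and "B \<subseteq> Y"
  shows "B - inner_boundary Y D B \<subseteq> (\<Union>s\<in>S \<inter> B. cball s D \<inter> Y)"
proof
  fix y assume y: "y \<in> B - inner_boundary Y D B"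
  then have "y \<in> Y" using assms(3) by blast
  with assms(1) obtain s where s: "s \<in> S" "dist y s \<le> D"
    unfolding dense_in_def by blast
  with y assms(2) have "s \<in> B"
    unfolding inner_boundary_def by blast
  with s \<open>y \<in> Y\<close> show "y \<in> (\<Union>s\<in>S \<inter> B. cball s D \<inter> Y)"
    by (auto simp: dist_commute)
qed

lemma inner_boundary_subset: "inner_boundary Y D B \<subseteq> B"
  unfolding inner_boundary_def by blast

theorem lemma3p16:
  fixes X :: "'a::metric_space set" and Y :: "'b::metric_space set"
    and \<psi> :: "'a \<Rightarrow> 'b" and D :: real and B :: "'b set"
  assumes "finite X" and "finite Y"
    and "\<psi> ` X \<subseteq> Y"
    and "D \<ge> 0"
    and "dense_in D (\<psi> ` X) Y"
    and "B \<subseteq> Y" and "B \<noteq> {}"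
  shows "real (card {x\<in>X. \<psi> x \<in> B})
           \<ge> real (card B) * (1 / real (ball_count Y D))
               * (1 - real (card (inner_boundary Y D B)) / real (card B))"
proof -
  let ?N = "ball_count Y D" and ?P = "{x\<in>X. \<psi> x \<in> B}" and ?Bd = "inner_boundary Y D B"
  have finB: "finite B" using assms(2,6) finite_subset by blast
  have N_pos: "?N > 0" using ball_count_pos assms(2,4,6,7) by blast
  have "card (B - ?Bd) \<le> card (\<psi> ` X \<inter> B) * ?N"
    using assms(3) by (intro card_le_card_centres_mult_ball_count
        dense_in_covers_off_inner_boundary assms(2,5,6)) blast
  also have "card (\<psi> ` X \<inter> B) \<le> card ?P"
  proof -
    have "\<psi> ` X \<inter> B = \<psi> ` ?P" by blast
    then show ?thesis using assms(1) by (simp add: card_image_le)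
  qed
  finally have "real (card (B - ?Bd)) \<le> real (card ?P) * real ?N"
    by (metis mult_right_mono of_nat_le_iff of_nat_mult zero_le)
  moreover have "real (card (B - ?Bd)) = real (card B) - real (card ?Bd)"
    using finB inner_boundary_subset card_mono
    by (metis card_Diff_subset finite_subset of_nat_diff)
  moreover have "real (card B) * (1 / real ?N) * (1 - real (card ?Bd) / real (card B))
      = (real (card B) - real (card ?Bd)) / real ?N"
    using assms(7) finB N_pos by (simp add: field_simps)
  ultimately show ?thesis
    using N_pos by (simp add: divide_le_eq mult.commute)
qed

end
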